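(* Let $d\in\mathbb{N}$, $\beta\in(0,1]$, $r>0$ and $2\le p\le\infty$. There is a constant $c>0$ (depending on $d,\beta,r,p$) such that for all $m\in\mathbb{N}$, $$\varrho_m^o(\mathbf{A}^r_\beta(\mathcal{T}^d),L_p)\ge c\,m^{1-1/p-1/\beta-r/d}.$$
   Context: $\mathbb{T}^d=[0,2\pi)^d$ with normalized Lebesgue measure $\mu$, $L_p=L_p(\mathbb{T}^d,\mu)$ (sup norm for $p=\infty$). $\mathcal{T}^d=\{e^{i(\mathbf k,\mathbf x)}\}_{\mathbf k\in\mathbb{Z}^d}$ is the trigonometric system. Class $\mathbf{A}^r_\beta(\mathcal{T}^d)$: all $f=\sum_{\mathbf k\in\mathbb{Z}^d}a_{\mathbf k}e^{i(\mathbf k,\mathbf x)}$ with $\sum_{\mathbf k}|a_{\mathbf k}|<\infty$ and $\big(\sum_{[2^{j-1}]\le\|\mathbf k\|_\infty<2^j}|a_{\mathbf k}|^\beta\big)^{1/\beta}\le2^{-rj}$, $j=0,1,\dots$ ($[x]$ the integer part). $\varrho_m^o(\mathbf F,L_p)=\inf_\xi\inf_{\mathcal M}\sup_{f\in\mathbf F}\|f-\mathcal M(f(\xi^1),\dots,f(\xi^m))\|_p$, infima over all $m$-point sets $\xi\subset\mathbb{T}^d$ and all mappings $\mathcal M:\mathbb{C}^m\to L_p$. *)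

theory Defs
  imports "HOL-Analysis.Analysis"
begin

text \<open>The torus [0,2pi)^d, with dimension d = CARD('n).\<close>
definition torus :: "(real ^ 'n) set" where
  "torus = {x. \<forall>i. 0 \<le> x $ i \<and> x $ i < 2 * pi}"

definition trig :: "int ^ 'n \<Rightarrow> real ^ 'n \<Rightarrow> complex" where
  "trig k x = cis (\<Sum>i\<in>UNIV. real_of_int (k $ i) * x $ i)"

definition supnorm_int :: "int ^ 'n \<Rightarrow> int" where
  "supnorm_int k = Max (range (\<lambda>i. \<bar>k $ i\<bar>))"

definition dyadic_block :: "nat \<Rightarrow> (int ^ 'n) set" where
  "dyadic_block j = {k. \<lfloor>(2::real) powr (real j - 1)\<rfloor> \<le> supnorm_int k \<and> supnorm_int k < 2 ^ j}"

definition A_class :: "real \<Rightarrow> real \<Rightarrow> (real ^ 'n \<Rightarrow> complex) set" where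
  "A_class r \<beta> = {f. \<exists>a :: int ^ 'n \<Rightarrow> complex.
      (\<lambda>k. norm (a k)) summable_on UNIV \<and>
      f = (\<lambda>x. \<Sum>\<^sub>\<infinity>k. a k * trig k x) \<and>
      (\<forall>j::nat. (\<Sum>k\<in>dyadic_block j. norm (a k) powr \<beta>) powr (1 / \<beta>) \<le> 2 powr (- r * real j))}"

definition Lp_norm :: "ennreal \<Rightarrow> (real ^ 'n \<Rightarrow> complex) \<Rightarrow> ennreal" where
  "Lp_norm p g =
    (if p = \<infinity> then (SUP x\<in>torus. ennreal (norm (g x)))
     else (let I = (\<integral>\<^sup>+ x. ennreal (norm (g x) powr enn2real p) * indicator torus x \<partial>lborel)
                   / ennreal ((2 * pi) ^ CARD('n))
           in if I = \<infinity> then \<infinity> else ennreal (enn2real I powr (1 / enn2real p))))"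

definition rho_o :: "nat \<Rightarrow> (real ^ 'n \<Rightarrow> complex) set \<Rightarrow> ennreal \<Rightarrow> ennreal" where
  "rho_o m F p =
    (INF \<xi>\<in>{\<xi> :: (real ^ 'n) list. length \<xi> = m \<and> set \<xi> \<subseteq> torus}.
      INF M\<in>{M :: complex list \<Rightarrow> real ^ 'n \<Rightarrow> complex. \<forall>y. M y \<in> borel_measurable lborel}.
        SUP f\<in>F. Lp_norm p (\<lambda>x. f x - M (map f \<xi>) x))"

definition inv_exp :: "ennreal \<Rightarrow> real" where
  "inv_exp p = (if p = \<infinity> then 0 else 1 / enn2real p)"

end

theory Submission
  imports Defs
begin

text \<open>
  Given m sample points, choose N with (N + 1)^d > m. Linear algebra gives a nonzero trigonometric
  polynomial with frequencies in [0, N]^d vanishing at the points. Multiplying it by a Dirichlet-type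
  kernel centered at the point x0 of the grid (2 pi / (2N + 1)) Z^d where it is largest, discrete
  Parseval shows that the product F still vanishes at the points, has modulus 1 at x0 and
  l2-coefficient norm at most (N + 1)^(-d/2); suitably scaled, both F and -F lie in the class.
  The l1-norm of the coefficients controls the Lipschitz constant, so F stays large on a cube of side
  about 1/N at x0. Since F and -F have the same samples, every recovery method errs on one of them by
  about N^(d - d/beta - r) N^(-d/p), which is m^(1 - 1/p - 1/beta - r/d) for N about m^(1/d).
\<close>

section \<open>Trigonometric polynomials on lattice cubes\<close>

definition Pi_vec :: "'a set \<Rightarrow> ('a ^ 'n) set" where
  "Pi_vec S = {v. \<forall>i. v $ i \<in> S}"

lemma Pi_vec_eq_image_PiE: "Pi_vec S = vec_lambda ` PiE UNIV (\<lambda>_. S)"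
proof
  show "Pi_vec S \<subseteq> vec_lambda ` PiE UNIV (\<lambda>_. S)"
  proof
    fix v :: "'a ^ 'n" assume "v \<in> Pi_vec S"
    then have "vec_nth v \<in> PiE UNIV (\<lambda>_. S)" by (auto simp: Pi_vec_def)
    then show "v \<in> vec_lambda ` PiE UNIV (\<lambda>_. S)" by (metis image_eqI vec_nth_inverse)
  qed
qed (auto simp: Pi_vec_def)

lemma finite_Pi_vec: "finite S \<Longrightarrow> finite (Pi_vec S :: ('a ^ 'n::finite) set)"
  unfolding Pi_vec_eq_image_PiE by (auto intro!: finite_PiE)

lemma sum_prod_Pi_vec:
  fixes h :: "'n::finite \<Rightarrow> 'a \<Rightarrow> 'c::comm_semiring_1"
  assumes "finite S"
  shows "(\<Sum>v\<in>(Pi_vec S :: ('a ^ 'n) set). \<Prod>i\<in>UNIV. h i (v $ i)) = (\<Prod>i\<in>UNIV. \<Sum>t\<in>S. h i t)"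
proof -
  have inj: "inj_on (vec_lambda :: ('n \<Rightarrow> 'a) \<Rightarrow> 'a ^ 'n) (PiE UNIV (\<lambda>_. S))"
    by (auto simp: inj_on_def vec_eq_iff PiE_def extensional_def fun_eq_iff)
  have "(\<Prod>i\<in>UNIV. \<Sum>t\<in>S. h i t) = (\<Sum>g\<in>PiE UNIV (\<lambda>_. S). \<Prod>i\<in>UNIV. h i (g i))"
    using assms by (intro prod_sum_PiE) auto
  also have "\<dots> = (\<Sum>v\<in>(Pi_vec S :: ('a ^ 'n) set). \<Prod>i\<in>UNIV. h i (v $ i))"
    unfolding Pi_vec_eq_image_PiE by (simp add: sum.reindex[OF inj])
  finally show ?thesis by simp
qed

lemma card_Pi_vec: "finite S \<Longrightarrow> card (Pi_vec S :: ('a ^ 'n::finite) set) = card S ^ CARD('n)"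
  using sum_prod_Pi_vec[where h = "\<lambda>_ _. 1::nat"] by simp

lemma add_mem_Pi_vec_atLeastAtMost:
  fixes k l :: "int ^ 'n"
  assumes "k \<in> Pi_vec {0..a}" "l \<in> Pi_vec {0..b}"
  shows "k + l \<in> Pi_vec {0..a + b}"
  using assms by (auto simp: Pi_vec_def intro: add_mono)

lemma trig_eq_prod_cis: "trig k x = (\<Prod>i\<in>UNIV. cis (real_of_int (k $ i) * x $ i))"
  by (simp add: trig_def cis_conv_exp exp_sum[symmetric] sum_distrib_left)

lemma trig_add: "trig (k + l) x = trig k x * trig l x"
  by (simp add: trig_def cis_mult sum.distrib[symmetric] distrib_right)

lemma norm_trig [simp]: "norm (trig k x) = 1"
  by (simp add: trig_def)

lemma cnj_trig: "cnj (trig k x) = trig (- k) x"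
  by (simp add: trig_def cis_cnj sum_negf)

lemma norm_cis_diff_le: "norm (cis a - cis b) \<le> \<bar>a - b\<bar>"
proof -
  have "(norm (cis a - cis b))\<^sup>2 = 2 - 2 * cos (a - b)"
    by (simp add: cmod_power2 cos_diff power2_diff sin_squared_eq algebra_simps)
  also have "\<dots> = 4 * (sin ((a - b) / 2))\<^sup>2"
  proof -
    have e: "2 * ((a - b) / 2) = a - b" by simp
    show ?thesis using cos_double_sin[of "(a - b) / 2"] unfolding e by simp
  qed
  also have "\<dots> \<le> 4 * ((a - b) / 2)\<^sup>2"
    by (metis abs_ge_zero abs_sin_x_le_abs_x power2_abs power_mono mult_left_mono zero_le_numeral)
  also have "\<dots> = (\<bar>a - b\<bar>)\<^sup>2" by (simp add: power2_eq_square)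
  finally show ?thesis by (rule power2_le_imp_le) simp
qed

lemma norm_trig_diff_le:
  fixes k :: "int ^ 'n::finite" and x y :: "real ^ 'n" and L :: int
  assumes "\<And>i. \<bar>k $ i\<bar> \<le> L" "\<And>i. \<bar>x $ i - y $ i\<bar> \<le> \<delta>"
  shows "norm (trig k x - trig k y) \<le> real CARD('n) * L * \<delta>"
proof -
  have "0 \<le> L" using abs_ge_zero[of "k $ undefined"] assms(1)[of undefined] by linarith
  have "norm (trig k x - trig k y)
      \<le> \<bar>(\<Sum>i\<in>UNIV. real_of_int (k $ i) * x $ i) - (\<Sum>i\<in>UNIV. real_of_int (k $ i) * y $ i)\<bar>"
    unfolding trig_def by (rule norm_cis_diff_le)
  also have "\<dots> = \<bar>\<Sum>i\<in>UNIV. real_of_int (k $ i) * (x $ i - y $ i)\<bar>"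
    by (simp add: sum_subtractf[symmetric] algebra_simps)
  also have "\<dots> \<le> (\<Sum>i\<in>UNIV. \<bar>real_of_int (k $ i)\<bar> * \<bar>x $ i - y $ i\<bar>)"
    unfolding abs_mult[symmetric] by (rule sum_abs)
  also have "\<dots> \<le> (\<Sum>i\<in>(UNIV :: 'n set). L * \<delta>)"
    using assms \<open>0 \<le> L\<close> by (intro sum_mono mult_mono) (auto simp flip: of_int_abs)
  finally show ?thesis by simp
qed

definition trig_poly :: "(int ^ 'n \<Rightarrow> complex) \<Rightarrow> (int ^ 'n) set \<Rightarrow> real ^ 'n \<Rightarrow> complex" where
  "trig_poly c S x = (\<Sum>k\<in>S. c k * trig k x)"

lemma borel_measurable_trig_poly: "trig_poly c S \<in> borel_measurable lborel"
proof -
  have "continuous_on UNIV (trig_poly c S)"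
    unfolding trig_poly_def[abs_def] trig_def by (intro continuous_intros)
  then show ?thesis by (simp add: borel_measurable_continuous_onI)
qed

lemma trig_poly_mult:
  fixes c d :: "int ^ 'n::finite \<Rightarrow> complex"
  assumes "finite B" "finite B2" "\<And>l j. l \<in> B \<Longrightarrow> j \<in> B \<Longrightarrow> l + j \<in> B2"
  shows "trig_poly (\<lambda>k. \<Sum>l\<in>B. if k - l \<in> B then c l * d (k - l) else 0) B2 x
       = trig_poly c B x * trig_poly d B x"
proof -
  have shift: "(\<Sum>k\<in>B2. (if k - l \<in> B then d (k - l) else 0) * trig k x)
             = (\<Sum>j\<in>B. d j * trig (l + j) x)" if "l \<in> B" for l
  proof -
    have "(\<Sum>k\<in>B2. (if k - l \<in> B then d (k - l) else 0) * trig k x)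
        = (\<Sum>k\<in>(\<lambda>j. l + j) ` B. d (k - l) * trig k x)"
      using assms that by (intro sum.mono_neutral_cong_right) (auto simp: image_iff, metis add.commute diff_add_cancel)
    also have "\<dots> = (\<Sum>j\<in>B. d j * trig (l + j) x)"
      by (subst sum.reindex) (auto simp: inj_on_def)
    finally show ?thesis .
  qed
  have "trig_poly (\<lambda>k. \<Sum>l\<in>B. if k - l \<in> B then c l * d (k - l) else 0) B2 x
      = (\<Sum>l\<in>B. c l * (\<Sum>k\<in>B2. (if k - l \<in> B then d (k - l) else 0) * trig k x))"
    unfolding trig_poly_def sum_distrib_right sum_distrib_left
    by (subst sum.swap) (simp add: if_distrib if_distribR mult.assoc cong: if_cong)
  also have "\<dots> = (\<Sum>l\<in>B. c l * (\<Sum>j\<in>B. d j * trig (l + j) x))"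
    by (intro sum.cong refl) (simp add: shift)
  also have "\<dots> = (\<Sum>l\<in>B. \<Sum>j\<in>B. c l * trig l x * (d j * trig j x))"
    by (simp add: sum_distrib_left trig_add mult_ac)
  also have "\<dots> = trig_poly c B x * trig_poly d B x"
    by (simp add: trig_poly_def sum_product)
  finally show ?thesis .
qed

lemma norm_trig_poly_diff_le:
  fixes a :: "int ^ 'n::finite \<Rightarrow> complex" and L :: int
  assumes "\<And>k i. k \<in> S \<Longrightarrow> \<bar>k $ i\<bar> \<le> L" "\<And>i. \<bar>x $ i - y $ i\<bar> \<le> \<delta>"
  shows "norm (trig_poly a S x - trig_poly a S y) \<le> real CARD('n) * L * \<delta> * (\<Sum>k\<in>S. norm (a k))"
proof -
  have "norm (trig_poly a S x - trig_poly a S y) \<le> (\<Sum>k\<in>S. norm (a k) * norm (trig k x - trig k y))"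
    unfolding trig_poly_def
    by (simp add: sum_subtractf[symmetric] right_diff_distrib[symmetric] norm_mult order_trans[OF norm_sum])
  also have "\<dots> \<le> (\<Sum>k\<in>S. norm (a k) * (real CARD('n) * L * \<delta>))"
    using assms by (intro sum_mono mult_left_mono norm_trig_diff_le) auto
  finally show ?thesis by (simp add: sum_distrib_left mult_ac)
qed

section \<open>Discrete orthogonality on a grid\<close>

lemma sum_cis_roots_of_unity:
  fixes v :: int and M :: nat
  assumes "M > 0" "\<bar>v\<bar> < int M"
  shows "(\<Sum>t<M. cis (real_of_int v * (2 * pi * real t / real M))) = (if v = 0 then of_nat M else 0)"
proof (cases "v = 0")
  case False
  define z where "z = cis (2 * pi * real_of_int v / real M)"
  have powers: "cis (real_of_int v * (2 * pi * real t / real M)) = z ^ t" for t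
    unfolding z_def Complex.DeMoivre by (simp add: field_simps)
  have "z \<noteq> 1"
  proof
    assume "z = 1"
    then obtain n :: int where "2 * pi * real_of_int v / real M = of_int (2 * n) * pi"
      by (auto simp: z_def cis_conv_exp exp_eq_1)
    then have v: "v = n * int M"
      using assms(1) by (simp add: field_simps) (metis of_int_eq_iff of_int_mult of_int_of_nat_eq)
    with False have "1 \<le> \<bar>n\<bar>" by auto
    then have "int M \<le> \<bar>v\<bar>"
      using mult_right_mono[of 1 "\<bar>n\<bar>" "int M"] by (simp add: v abs_mult)
    with assms(2) show False by simp
  qed
  moreover have "z ^ M = 1"
    using assms by (simp add: z_def Complex.DeMoivre)
  ultimately have "(\<Sum>t<M. z ^ t) = 0"
    by (simp add: sum_gp_strict)
  then show ?thesis
    using False by (simp only: powers) simp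
qed simp

definition grid :: "nat \<Rightarrow> (real ^ 'n) set" where
  "grid M = Pi_vec ((\<lambda>t. 2 * pi * real t / real M) ` {..<M})"

lemma finite_grid: "finite (grid M :: (real ^ 'n::finite) set)"
  unfolding grid_def by (intro finite_Pi_vec) auto

lemma grid_nonempty: "M > 0 \<Longrightarrow> grid M \<noteq> {}"
  unfolding grid_def Pi_vec_def by (auto intro!: exI[of _ 0] image_eqI[of 0 _ 0])

lemma sum_trig_grid:
  fixes v :: "int ^ 'n::finite"
  assumes "M > 0" "\<And>i. \<bar>v $ i\<bar> < int M"
  shows "(\<Sum>x\<in>(grid M :: (real ^ 'n) set). trig v x) = (if v = 0 then of_nat M ^ CARD('n) else 0)"
proof -
  have inj: "inj_on (\<lambda>t. 2 * pi * real t / real M) {..<M}"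
    using assms(1) by (auto simp: inj_on_def)
  have "(\<Sum>x\<in>(grid M :: (real ^ 'n) set). trig v x)
      = (\<Prod>i\<in>UNIV. \<Sum>t<M. cis (real_of_int (v $ i) * (2 * pi * real t / real M)))"
    unfolding trig_eq_prod_cis grid_def by (subst sum_prod_Pi_vec) (simp_all add: sum.reindex[OF inj])
  also have "\<dots> = (\<Prod>i\<in>UNIV. if v $ i = 0 then of_nat M else 0)"
    by (intro prod.cong refl sum_cis_roots_of_unity) (use assms in auto)
  also have "\<dots> = (if v = 0 then of_nat M ^ CARD('n) else 0)"
    by (auto simp: vec_eq_iff prod_zero_iff)
  finally show ?thesis .
qed

lemma grid_parseval:
  fixes c :: "int ^ 'n::finite \<Rightarrow> complex" and L :: int
  assumes "finite S" "S \<subseteq> Pi_vec {0..L}" "L < int M"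
  shows "(\<Sum>x\<in>(grid M :: (real ^ 'n) set). (norm (trig_poly c S x))\<^sup>2)
       = real M ^ CARD('n) * (\<Sum>k\<in>S. (norm (c k))\<^sup>2)"
proof -
  have orth: "(\<Sum>x\<in>(grid M :: (real ^ 'n) set). trig (k - l) x) = (if k = l then of_nat M ^ CARD('n) else 0)"
    if "k \<in> S" "l \<in> S" for k l
  proof -
    have bound: "\<bar>(k - l) $ i\<bar> < int M" for i
    proof -
      have "k $ i \<in> {0..L}" "l $ i \<in> {0..L}" using that assms(2) by (auto simp: Pi_vec_def)
      then show ?thesis using assms(3) by simp arith
    qed
    then have "M > 0" using bound[of undefined] by linarith
    with bound show ?thesis by (simp add: sum_trig_grid)
  qed
  have expand: "(norm (trig_poly c S x))\<^sup>2 = (\<Sum>k\<in>S. \<Sum>l\<in>S. c k * cnj (c l) * trig (k - l) x)"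
    for x :: "real ^ 'n"
  proof -
    have "trig (k - l) x = trig k x * cnj (trig l x)" for k l
      using trig_add[of k "- l" x] by (simp add: cnj_trig)
    then show ?thesis
      unfolding complex_norm_square trig_poly_def cnj_sum sum_product
      by (simp add: mult_ac)
  qed
  have "complex_of_real (\<Sum>x\<in>(grid M :: (real ^ 'n) set). (norm (trig_poly c S x))\<^sup>2)
      = (\<Sum>x\<in>(grid M :: (real ^ 'n) set). \<Sum>k\<in>S. \<Sum>l\<in>S. c k * cnj (c l) * trig (k - l) x)"
    by (simp only: of_real_sum expand)
  also have "\<dots> = (\<Sum>k\<in>S. \<Sum>l\<in>S. c k * cnj (c l) * (\<Sum>x\<in>(grid M :: (real ^ 'n) set). trig (k - l) x))"
    by (simp only: sum_distrib_left, subst sum.swap, rule sum.cong[OF refl], subst sum.swap, rule refl)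
  also have "\<dots> = (\<Sum>k\<in>S. \<Sum>l\<in>S. if k = l then c k * cnj (c l) * of_nat M ^ CARD('n) else 0)"
    by (intro sum.cong refl) (simp add: orth)
  also have "\<dots> = (\<Sum>k\<in>S. c k * cnj (c k) * of_nat M ^ CARD('n))"
    using assms(1) by simp
  also have "\<dots> = complex_of_real (real M ^ CARD('n) * (\<Sum>k\<in>S. (norm (c k))\<^sup>2))"
    by (simp add: complex_norm_square[symmetric] sum_distrib_left mult_ac)
  finally show ?thesis by (simp only: of_real_eq_iff)
qed

lemma exists_grid_peak:
  fixes c :: "int ^ 'n::finite \<Rightarrow> complex" and L :: int
  assumes "finite S" "S \<subseteq> Pi_vec {0..L}" "L < int M" "\<exists>k\<in>S. c k \<noteq> 0"
  shows "\<exists>x0\<in>grid M. 0 < norm (trig_poly c S x0) \<and>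
           (\<forall>x\<in>grid M. norm (trig_poly c S x) \<le> norm (trig_poly c S x0))"
proof -
  have fin: "finite (grid M :: (real ^ 'n) set)" by (rule finite_grid)
  obtain k where "k \<in> S" "c k \<noteq> 0" using assms(4) by blast
  then have "0 \<le> L" using assms(2) by (force simp: Pi_vec_def)
  then have "M > 0" using assms(3) by linarith
  then have "grid M \<noteq> {}" by (rule grid_nonempty)
  then have "Max ((\<lambda>x. norm (trig_poly c S x)) ` grid M) \<in> (\<lambda>x. norm (trig_poly c S x)) ` grid M"
    using fin by (intro Max_in) auto
  then obtain x0 where x0: "x0 \<in> grid M"
    and "norm (trig_poly c S x0) = Max ((\<lambda>x. norm (trig_poly c S x)) ` grid M)"
    by auto
  then have max: "\<forall>x\<in>grid M. norm (trig_poly c S x) \<le> norm (trig_poly c S x0)"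
    using fin by simp
  have "norm (trig_poly c S x0) \<noteq> 0"
  proof
    assume "norm (trig_poly c S x0) = 0"
    then have "(\<Sum>x\<in>(grid M :: (real ^ 'n) set). (norm (trig_poly c S x))\<^sup>2) = 0"
      using max by (intro sum.neutral) (metis norm_ge_zero order_antisym power_zero_numeral)
    moreover have "(\<Sum>k\<in>S. (norm (c k))\<^sup>2) > 0"
      using \<open>k \<in> S\<close> \<open>c k \<noteq> 0\<close> assms(1) by (intro sum_pos2) auto
    ultimately show False
      using grid_parseval[OF assms(1-3), of c] \<open>M > 0\<close> by simp
  qed
  with x0 max show ?thesis by auto
qed

lemma cbox_at_grid_point_subset_torus:
  assumes "x0 \<in> grid M" "0 < \<delta>" "\<delta> < 2 * pi / real M"
  shows "cbox x0 (\<chi> i. x0 $ i + \<delta>) \<subseteq> torus"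
proof
  fix x assume x: "x \<in> cbox x0 (\<chi> i. x0 $ i + \<delta>)"
  have "0 \<le> x $ i \<and> x $ i < 2 * pi" for i
  proof -
    obtain t where t: "t < M" "x0 $ i = 2 * pi * real t / real M"
      using assms(1) by (auto simp: grid_def Pi_vec_def)
    have "real t \<le> real M - 1" using t(1) by linarith
    then have "x0 $ i \<le> 2 * pi * (real M - 1) / real M"
      unfolding t(2) by (intro divide_right_mono) auto
    also have "\<dots> = 2 * pi - 2 * pi / real M"
      using t by (simp add: field_simps)
    finally have "x0 $ i + \<delta> < 2 * pi" using assms(3) by linarith
    moreover have "0 \<le> x0 $ i" using t by simp
    ultimately show ?thesis using x by (auto simp: mem_box_cart dest: spec[of _ i])
  qed
  then show "x \<in> torus" by (simp add: torus_def)
qed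

section \<open>Linear algebra and power means\<close>

lemma exists_nonzero_annihilator:
  fixes Ls :: "('a \<Rightarrow> 'b::field) list"
  assumes "finite S" "length Ls < card S"
  shows "\<exists>c. (\<exists>k\<in>S. c k \<noteq> 0) \<and> (\<forall>L\<in>set Ls. (\<Sum>k\<in>S. c k * L k) = 0)"
  using assms
proof (induction "length Ls" arbitrary: Ls S)
  case 0
  then obtain s where "s \<in> S" by fastforce
  with 0 show ?case by (intro exI[of _ "\<lambda>_. 1"]) auto
next
  case (Suc n)
  then obtain L Ls' where Ls: "Ls = L # Ls'" by (cases Ls) auto
  show ?case
  proof (cases "\<forall>k\<in>S. L k = 0")
    case True
    with Suc.hyps(1)[of Ls' S] Suc.prems Suc.hyps(2) show ?thesis by (auto simp: Ls)
  next
    case False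
    then obtain s where s: "s \<in> S" "L s \<noteq> 0" by auto
    define S' where "S' = S - {s}"
    \<comment> \<open>Gaussian elimination: the reduced functionals vanish at s.\<close>
    define reduce where "reduce L' k = L' k - L' s / L s * L k" for L' :: "'a \<Rightarrow> 'b" and k
    have "n = length (map reduce Ls')" "finite S'" "length (map reduce Ls') < card S'"
      using Suc.hyps(2) Suc.prems s by (auto simp: S'_def Ls)
    from Suc.hyps(1)[OF this] obtain c'
      where c': "\<exists>k\<in>S'. c' k \<noteq> 0" "\<forall>L'\<in>set Ls'. (\<Sum>k\<in>S'. c' k * reduce L' k) = 0"
      by auto
    define c where "c k = (if k = s then - (\<Sum>j\<in>S'. c' j * L j) / L s else c' k)" for k
    have split: "(\<Sum>k\<in>S. c k * F k) = c s * F s + (\<Sum>k\<in>S'. c' k * F k)" for F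
    proof -
      have "(\<Sum>k\<in>S'. c k * F k) = (\<Sum>k\<in>S'. c' k * F k)"
        by (intro sum.cong) (auto simp: c_def S'_def)
      then show ?thesis using Suc.prems(1) s(1) by (simp add: S'_def sum.remove)
    qed
    have "(\<Sum>k\<in>S. c k * L' k) = 0" if "L' \<in> set Ls'" for L'
    proof -
      have "(\<Sum>k\<in>S'. c' k * L' k) - L' s / L s * (\<Sum>k\<in>S'. c' k * L k) = 0"
        using c'(2) that by (simp add: reduce_def algebra_simps sum_subtractf sum_distrib_left)
      then show ?thesis unfolding split using s(2) by (simp add: c_def field_simps)
    qed
    moreover have "(\<Sum>k\<in>S. c k * L k) = 0"
      unfolding split using s by (simp add: c_def)
    moreover have "\<exists>k\<in>S. c k \<noteq> 0"
      using c'(1) by (auto simp: c_def S'_def)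
    ultimately show ?thesis by (intro exI[of _ c]) (auto simp: Ls)
  qed
qed

lemma sum_powr_le_card_powr_sum_squares:
  fixes u :: "'a \<Rightarrow> real"
  assumes "finite S" "0 < \<beta>" "\<beta> \<le> 2"
  shows "(\<Sum>k\<in>S. \<bar>u k\<bar> powr \<beta>) \<le> real (card S) powr (1 - \<beta> / 2) * (\<Sum>k\<in>S. (u k)\<^sup>2) powr (\<beta> / 2)"
proof (cases "(\<Sum>k\<in>S. (u k)\<^sup>2) = 0")
  case True
  then show ?thesis using assms(1) by (simp add: sum_nonneg_eq_0_iff)
next
  case False
  define \<Sigma> where "\<Sigma> = (\<Sum>k\<in>S. (u k)\<^sup>2)"
  define \<theta> where "\<theta> = \<beta> / 2"
  have "\<Sigma> > 0" using False by (simp add: \<Sigma>_def order_less_le sum_nonneg)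
  have "card S > 0" using False assms(1) by (auto simp: card_gt_0_iff)
  define a where "a = \<Sigma> / card S"
  have "a > 0" using \<open>\<Sigma> > 0\<close> \<open>card S > 0\<close> by (simp add: a_def)
  have \<theta>: "0 < \<theta>" "\<theta> \<le> 1" using assms by (auto simp: \<theta>_def)
  have young: "\<bar>u k\<bar> powr \<beta> \<le> a powr \<theta> * (\<theta> * ((u k)\<^sup>2 / a) + (1 - \<theta>))" for k
  proof (cases "u k = 0")
    case True
    then show ?thesis using \<theta> \<open>a > 0\<close> by simp
  next
    case False
    have "((u k)\<^sup>2 / a) powr \<theta> * 1 powr (1 - \<theta>) \<le> \<theta> * ((u k)\<^sup>2 / a) + (1 - \<theta>) * 1"
      using \<theta> \<open>a > 0\<close> False by (intro Youngs_inequality_0) auto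
    moreover have "\<bar>u k\<bar> powr \<beta> = a powr \<theta> * ((u k)\<^sup>2 / a) powr \<theta>"
    proof -
      have "(u k)\<^sup>2 = \<bar>u k\<bar> powr 2" using False by (simp add: powr_numeral)
      then have "((u k)\<^sup>2) powr \<theta> = \<bar>u k\<bar> powr \<beta>" by (simp only: powr_powr) (simp add: \<theta>_def)
      moreover have "a * ((u k)\<^sup>2 / a) = (u k)\<^sup>2" using \<open>a > 0\<close> by simp
      ultimately show ?thesis using \<open>a > 0\<close> by (metis powr_mult less_imp_le zero_le_power2 divide_nonneg_pos)
    qed
    ultimately show ?thesis using \<open>a > 0\<close> by (simp add: mult_left_mono)
  qed
  have "(\<Sum>k\<in>S. \<bar>u k\<bar> powr \<beta>) \<le> (\<Sum>k\<in>S. a powr \<theta> * (\<theta> * ((u k)\<^sup>2 / a) + (1 - \<theta>)))"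
    by (rule sum_mono[OF young])
  also have "\<dots> = a powr \<theta> * (\<Sum>k\<in>S. \<theta> / a * (u k)\<^sup>2 + (1 - \<theta>))"
    by (simp add: sum_distrib_left)
  also have "(\<Sum>k\<in>S. \<theta> / a * (u k)\<^sup>2 + (1 - \<theta>)) = \<theta> / a * \<Sigma> + (1 - \<theta>) * card S"
    by (simp add: sum.distrib sum_distrib_left \<Sigma>_def)
  also have "\<theta> / a * \<Sigma> + (1 - \<theta>) * card S = card S"
    using \<open>card S > 0\<close> \<open>\<Sigma> > 0\<close> by (simp add: a_def field_simps)
  also have "a powr \<theta> * card S = real (card S) powr (1 - \<theta>) * \<Sigma> powr \<theta>"
    using \<open>card S > 0\<close> \<open>\<Sigma> > 0\<close>
    by (simp add: a_def powr_divide powr_diff field_simps)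
  finally show ?thesis by (simp add: \<Sigma>_def \<theta>_def)
qed

lemma powr_sum_powr_le_card_powr_sqrt:
  fixes u :: "'a \<Rightarrow> real"
  assumes "finite S" "0 < \<beta>" "\<beta> \<le> 2"
  shows "(\<Sum>k\<in>S. \<bar>u k\<bar> powr \<beta>) powr (1 / \<beta>) \<le> real (card S) powr (1 / \<beta> - 1 / 2) * sqrt (\<Sum>k\<in>S. (u k)\<^sup>2)"
proof -
  have "(\<Sum>k\<in>S. \<bar>u k\<bar> powr \<beta>) powr (1 / \<beta>)
      \<le> (real (card S) powr (1 - \<beta> / 2) * (\<Sum>k\<in>S. (u k)\<^sup>2) powr (\<beta> / 2)) powr (1 / \<beta>)"
    using sum_powr_le_card_powr_sum_squares[OF assms] assms(2)
    by (intro powr_mono2) (auto intro: sum_nonneg)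
  also have "\<dots> = real (card S) powr ((1 - \<beta> / 2) / \<beta>) * (\<Sum>k\<in>S. (u k)\<^sup>2) powr (1 / 2)"
    using assms(2) by (simp add: powr_mult powr_powr sum_nonneg)
  also have "(1 - \<beta> / 2) / \<beta> = 1 / \<beta> - 1 / 2"
    using assms(2) by (simp add: field_simps)
  finally show ?thesis by (simp add: powr_half_sqrt sum_nonneg)
qed

section \<open>Lower bounds from fooling pairs\<close>

lemma sets_lborel_torus: "torus \<in> sets lborel"
proof -
  have "torus = (\<Inter>i. {x :: real ^ 'n. 0 \<le> x $ i} \<inter> {x. x $ i < 2 * pi})"
    by (auto simp: torus_def)
  also have "\<dots> \<in> sets lborel"
    by (intro sets.countable_INT' sets.Int)
       (auto intro: borel_closed borel_open closed_Collect_le open_Collect_less continuous_intros)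
  finally show ?thesis .
qed

lemma Lp_norm_ge_of_nn_integral_ge:
  fixes g :: "real ^ 'n::finite \<Rightarrow> complex" and q K :: real
  assumes "q > 0" "K \<ge> 0"
    and "ennreal K \<le> (\<integral>\<^sup>+ x. ennreal (norm (g x) powr q) * indicator torus x \<partial>lborel)"
  shows "ennreal ((K / (2 * pi) ^ CARD('n)) powr (1 / q)) \<le> Lp_norm (ennreal q) g"
proof -
  define I where
    "I = (\<integral>\<^sup>+ x. ennreal (norm (g x) powr q) * indicator torus x \<partial>lborel) / ennreal ((2 * pi) ^ CARD('n))"
  have "ennreal K / ennreal ((2 * pi) ^ CARD('n)) \<le> I"
    unfolding I_def using assms(3) by (rule divide_right_mono_ennreal)
  then have KI: "ennreal (K / (2 * pi) ^ CARD('n)) \<le> I"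
    using assms(2) by (simp add: divide_ennreal)
  have Lp: "Lp_norm (ennreal q) g = (if I = \<infinity> then \<infinity> else ennreal (enn2real I powr (1 / q)))"
    unfolding Lp_norm_def I_def Let_def using assms(1) by simp
  show ?thesis
  proof (cases "I = \<infinity>")
    case False
    then have "K / (2 * pi) ^ CARD('n) \<le> enn2real I"
      using enn2real_mono[OF KI] assms(2) by (simp add: top.not_eq_extremum)
    then have "(K / (2 * pi) ^ CARD('n)) powr (1 / q) \<le> enn2real I powr (1 / q)"
      using assms by (intro powr_mono2) auto
    then show ?thesis using Lp False by (simp add: ennreal_leI)
  qed (simp add: Lp)
qed

lemma norm_le_norm_diff_or_norm_minus_diff:
  fixes u v :: complex
  shows "norm u \<le> norm (u - v) \<or> norm u \<le> norm (- u - v)"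
proof -
  have "2 * norm u \<le> norm (u - v) + norm (- u - v)"
    using norm_triangle_ineq4[of "u - v" "- u - v"] by (simp add: algebra_simps)
  then show ?thesis by linarith
qed

lemma nn_integral_fooling_pair:
  fixes F h :: "real ^ 'n::finite \<Rightarrow> complex" and q :: real
  assumes "0 < q"
    and [measurable]: "F \<in> borel_measurable lborel" "h \<in> borel_measurable lborel"
    and Q: "Q \<in> sets lborel" "Q \<subseteq> torus" "emeasure lborel Q = ennreal V" "V > 0"
    and "P > 0" and big: "\<And>x. x \<in> Q \<Longrightarrow> P \<le> norm (F x)"
  defines "I \<equiv> \<lambda>G. \<integral>\<^sup>+ x. ennreal (norm (G x - h x) powr q) * indicator torus x \<partial>lborel"
  shows "ennreal (P powr q * V / 2) \<le> I F \<or> ennreal (P powr q * V / 2) \<le> I (\<lambda>x. - F x)"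
proof -
  define \<phi> where "\<phi> G x = ennreal (norm (G x - h x) powr q) * indicator torus x"
    for G :: "real ^ 'n \<Rightarrow> complex" and x
  note sets_lborel_torus[measurable]
  have [measurable]: "\<phi> F \<in> borel_measurable lborel" "\<phi> (\<lambda>x. - F x) \<in> borel_measurable lborel"
    unfolding \<phi>_def by measurable
  have pointwise: "ennreal (P powr q) * indicator Q x \<le> \<phi> F x + \<phi> (\<lambda>x. - F x) x" for x
  proof (cases "x \<in> Q")
    case True
    have "P \<le> norm (F x - h x) \<or> P \<le> norm (- F x - h x)"
      using big[OF True] norm_le_norm_diff_or_norm_minus_diff[of "F x" "h x"] by linarith
    then have "P powr q \<le> norm (F x - h x) powr q + norm (- F x - h x) powr q"
      using \<open>P > 0\<close> \<open>q > 0\<close> by (elim disjE) (smt (verit, best) powr_ge_zero powr_mono2)+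
    then show ?thesis using True Q(2)
      by (auto simp: \<phi>_def ennreal_plus[symmetric] ennreal_leI simp del: ennreal_plus)
  qed simp
  define K where "K = P powr q * V"
  have "ennreal K = (\<integral>\<^sup>+ x. ennreal (P powr q) * indicator Q x \<partial>lborel)"
    using Q \<open>V > 0\<close> by (simp add: nn_integral_cmult_indicator K_def ennreal_mult)
  also have "\<dots> \<le> (\<integral>\<^sup>+ x. \<phi> F x + \<phi> (\<lambda>x. - F x) x \<partial>lborel)"
    by (intro nn_integral_mono pointwise)
  also have "\<dots> = I F + I (\<lambda>x. - F x)"
    unfolding I_def \<phi>_def[symmetric] by (rule nn_integral_add) measurable
  finally have sum: "ennreal K \<le> I F + I (\<lambda>x. - F x)" .
  show ?thesis
  proof (rule ccontr)
    assume "\<not> ?thesis"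
    then have "I F + I (\<lambda>x. - F x) < ennreal (K / 2) + ennreal (K / 2)"
      by (intro add_strict_mono) (auto simp: K_def)
    also have "\<dots> = ennreal K" using \<open>P > 0\<close> \<open>V > 0\<close> by (simp add: K_def flip: ennreal_plus)
    finally show False using sum by simp
  qed
qed

lemma Lp_norm_fooling_pair:
  fixes F h :: "real ^ 'n::finite \<Rightarrow> complex" and p :: ennreal
  assumes "0 < p"
    and F: "F \<in> borel_measurable lborel" and h: "h \<in> borel_measurable lborel"
    and Q: "Q \<in> sets lborel" "Q \<subseteq> torus" "emeasure lborel Q = ennreal V" "V > 0"
    and "P > 0" and big: "\<And>x. x \<in> Q \<Longrightarrow> P \<le> norm (F x)"
  defines "bound \<equiv> ennreal (P * (V / (2 * (2 * pi) ^ CARD('n))) powr inv_exp p)"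
  shows "bound \<le> Lp_norm p (\<lambda>x. F x - h x) \<or> bound \<le> Lp_norm p (\<lambda>x. - F x - h x)"
proof (cases "p = \<infinity>")
  case True
  have "Q \<noteq> {}" using Q(3,4) by auto
  then obtain x where x: "x \<in> Q" by blast
  then have "x \<in> torus" using Q(2) by auto
  have "ennreal P \<le> Lp_norm p g" if "P \<le> norm (g x)" for g :: "real ^ 'n \<Rightarrow> complex"
    unfolding Lp_norm_def using True that by (auto intro!: SUP_upper2[OF \<open>x \<in> torus\<close>] ennreal_leI)
  moreover have "P \<le> norm (F x - h x) \<or> P \<le> norm (- F x - h x)"
    using big[OF x] norm_le_norm_diff_or_norm_minus_diff[of "F x" "h x"] by linarith
  ultimately show ?thesis using True by (auto simp: bound_def inv_exp_def)
next
  case False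
  define q where "q = enn2real p"
  have pq: "p = ennreal q" using False unfolding q_def by (cases p) auto
  then have "q > 0" using assms(1) by simp
  have "((P powr q * V / 2) / (2 * pi) ^ CARD('n)) powr (1 / q)
      = (P powr q) powr (1 / q) * (V / (2 * (2 * pi) ^ CARD('n))) powr (1 / q)"
    using \<open>P > 0\<close> \<open>V > 0\<close> by (simp add: powr_mult[symmetric] field_simps)
  also have "\<dots> = P * (V / (2 * (2 * pi) ^ CARD('n))) powr inv_exp p"
    using \<open>P > 0\<close> \<open>q > 0\<close> False by (simp add: powr_powr inv_exp_def q_def)
  finally show ?thesis
    using nn_integral_fooling_pair[OF \<open>q > 0\<close> F h Q \<open>P > 0\<close> big]
      Lp_norm_ge_of_nn_integral_ge[of q "P powr q * V / 2" "\<lambda>x. F x - h x"]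
      Lp_norm_ge_of_nn_integral_ge[of q "P powr q * V / 2" "\<lambda>x. - F x - h x"] \<open>q > 0\<close> \<open>V > 0\<close>
    unfolding bound_def pq by auto
qed

lemma rho_o_ge_of_fooling_pairs:
  fixes C :: "(real ^ 'n::finite \<Rightarrow> complex) set" and p :: ennreal
  assumes "0 < p" "0 < V" "0 < P"
    and fool: "\<And>\<xi>. length \<xi> = m \<Longrightarrow> set \<xi> \<subseteq> torus \<Longrightarrow>
      \<exists>F Q. F \<in> C \<and> (\<lambda>x. - F x) \<in> C \<and> (\<forall>y\<in>set \<xi>. F y = 0) \<and> F \<in> borel_measurable lborel \<and>
        Q \<in> sets lborel \<and> Q \<subseteq> torus \<and> emeasure lborel Q = ennreal V \<and> (\<forall>x\<in>Q. P \<le> norm (F x))"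
  shows "ennreal (P * (V / (2 * (2 * pi) ^ CARD('n))) powr inv_exp p) \<le> rho_o m C p"
  unfolding rho_o_def
proof (intro INF_greatest)
  fix \<xi> :: "(real ^ 'n) list" and M :: "complex list \<Rightarrow> real ^ 'n \<Rightarrow> complex"
  assume "\<xi> \<in> {\<xi>. length \<xi> = m \<and> set \<xi> \<subseteq> torus}" and "M \<in> {M. \<forall>y. M y \<in> borel_measurable lborel}"
  then have \<xi>: "length \<xi> = m" "set \<xi> \<subseteq> torus" and M: "\<forall>y. M y \<in> borel_measurable lborel"
    by auto
  then obtain F Q where F: "F \<in> C" "(\<lambda>x. - F x) \<in> C" "\<forall>y\<in>set \<xi>. F y = 0" "F \<in> borel_measurable lborel"
    and Q: "Q \<in> sets lborel" "Q \<subseteq> torus" "emeasure lborel Q = ennreal V" "\<forall>x\<in>Q. P \<le> norm (F x)"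
    using fool[OF \<xi>] by auto
  define h where "h = M (map F \<xi>)"
  have h: "h \<in> borel_measurable lborel" using M by (simp add: h_def)
  \<comment> \<open>F and -F have the same samples, so M returns the same h for both.\<close>
  have "map (\<lambda>x. - F x) \<xi> = map F \<xi>" using F(3) by (simp add: map_eq_conv)
  then have same: "M (map (\<lambda>x. - F x) \<xi>) = h" unfolding h_def by (rule arg_cong)
  show "ennreal (P * (V / (2 * (2 * pi) ^ CARD('n))) powr inv_exp p)
      \<le> (SUP f\<in>C. Lp_norm p (\<lambda>x. f x - M (map f \<xi>) x))"
    using Lp_norm_fooling_pair[OF assms(1) F(4) h Q(1-3) assms(2,3)] Q(4) same
    by (auto simp: h_def intro: SUP_upper2[OF F(1)] SUP_upper2[OF F(2)])
qed

section \<open>The bump function\<close>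

lemma powr_le_of_mem_dyadic_block:
  fixes k :: "int ^ 'n::finite" and L :: nat
  assumes "k \<in> dyadic_block j" "supnorm_int k \<le> int L" "1 \<le> L" "0 \<le> r"
  shows "(4 * real L) powr (- r) \<le> 2 powr (- r * real j)"
proof -
  have "\<lfloor>(2::real) powr (real j - 1)\<rfloor> \<le> int L"
    using assms(1,2) by (auto simp: dyadic_block_def)
  then have "(2::real) powr real j < 4 * real L"
    using assms(3) by (simp add: floor_le_iff powr_diff)
  then have "(4 * real L) powr (- r) \<le> (2 powr real j) powr (- r)"
    using assms(4) by (intro powr_mono2') auto
  also have "\<dots> = 2 powr (- r * real j)"
    by (simp add: powr_powr mult.commute)
  finally show ?thesis .
qed

lemma trig_poly_in_A_class:
  fixes a :: "int ^ 'n::finite \<Rightarrow> complex" and L :: nat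
  assumes "finite S" "\<And>k. k \<in> S \<Longrightarrow> supnorm_int k \<le> int L" "1 \<le> L" "0 < \<beta>" "0 \<le> r"
    and coeffs: "(\<Sum>k\<in>S. norm (a k) powr \<beta>) powr (1 / \<beta>) \<le> (4 * real L) powr (- r)"
  shows "trig_poly a S \<in> A_class r \<beta>"
proof -
  define b where "b k = (if k \<in> S then a k else 0)" for k
  have "trig_poly a S = (\<lambda>x. \<Sum>\<^sub>\<infinity>k. b k * trig k x)"
  proof
    fix x
    have "(\<Sum>\<^sub>\<infinity>k. b k * trig k x) = (\<Sum>\<^sub>\<infinity>k\<in>S. b k * trig k x)"
      by (rule infsum_cong_neutral) (auto simp: b_def)
    then show "trig_poly a S x = (\<Sum>\<^sub>\<infinity>k. b k * trig k x)"
      using assms(1) by (simp add: trig_poly_def b_def)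
  qed
  moreover have "(\<lambda>k. norm (b k)) summable_on UNIV"
    using assms(1) by (subst summable_on_cong_neutral[where T = S and g = "\<lambda>k. norm (b k)"]) (auto simp: b_def)
  moreover have "(\<Sum>k\<in>dyadic_block j. norm (b k) powr \<beta>) powr (1 / \<beta>) \<le> 2 powr (- r * real j)" for j
  proof (cases "finite (dyadic_block j :: (int ^ 'n) set) \<and> dyadic_block j \<inter> S \<noteq> {}")
    case True
    then obtain k where "k \<in> dyadic_block j" "k \<in> S" by blast
    then have "(4 * real L) powr (- r) \<le> 2 powr (- r * real j)"
      using assms(2,3,5) by (intro powr_le_of_mem_dyadic_block) auto
    moreover have "(\<Sum>k\<in>dyadic_block j. norm (b k) powr \<beta>) \<le> (\<Sum>k\<in>S. norm (a k) powr \<beta>)"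
    proof -
      have "(\<Sum>k\<in>dyadic_block j. norm (b k) powr \<beta>) = (\<Sum>k\<in>dyadic_block j \<inter> S. norm (a k) powr \<beta>)"
        using True by (intro sum.mono_neutral_cong_right) (auto simp: b_def)
      also have "\<dots> \<le> (\<Sum>k\<in>S. norm (a k) powr \<beta>)"
        using assms(1) by (intro sum_mono2) auto
      finally show ?thesis .
    qed
    then have "(\<Sum>k\<in>dyadic_block j. norm (b k) powr \<beta>) powr (1 / \<beta>) \<le> (\<Sum>k\<in>S. norm (a k) powr \<beta>) powr (1 / \<beta>)"
      using assms(4) by (intro powr_mono2) (auto intro: sum_nonneg)
    ultimately show ?thesis using coeffs by linarith
  next
    case False
    \<comment> \<open>A sum over an infinite set is 0 by convention, so finiteness of the block is not needed.\<close>
    then have "(\<Sum>k\<in>dyadic_block j. norm (b k) powr \<beta>) = 0"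
      by (cases "finite (dyadic_block j :: (int ^ 'n) set)") (auto simp: b_def intro!: sum.neutral)
    then show ?thesis by simp
  qed
  ultimately show ?thesis unfolding A_class_def by blast
qed

definition peak_kernel :: "(int ^ 'n) set \<Rightarrow> real ^ 'n \<Rightarrow> int ^ 'n \<Rightarrow> complex" where
  "peak_kernel B x0 j = cnj (trig j x0) / of_nat (card B)"

lemma trig_poly_peak_kernel_at:
  assumes "finite B" "B \<noteq> {}"
  shows "trig_poly (peak_kernel B x0) B x0 = 1"
proof -
  have "trig_poly (peak_kernel B x0) B x0 = (\<Sum>j\<in>B. 1 / of_nat (card B))"
    unfolding trig_poly_def peak_kernel_def
    by (intro sum.cong refl) (simp add: complex_norm_square[symmetric] mult.commute)
  then show ?thesis using assms by simp
qed

lemma sum_norm_peak_kernel: "(\<Sum>j\<in>B. (norm (peak_kernel B x0 j))\<^sup>2) = 1 / real (card B)"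
  by (simp add: peak_kernel_def norm_divide power_divide power2_eq_square)

lemma exists_localized_trig_poly:
  fixes c :: "int ^ 'n::finite \<Rightarrow> complex" and N :: nat
  defines "B \<equiv> Pi_vec {0..int N} :: (int ^ 'n) set" and "B2 \<equiv> Pi_vec {0..2 * int N} :: (int ^ 'n) set"
  assumes "\<exists>k\<in>B. c k \<noteq> 0"
  shows "\<exists>e x0. x0 \<in> grid (2 * N + 1) \<and> norm (trig_poly e B2 x0) = 1 \<and>
           (\<forall>x. trig_poly c B x = 0 \<longrightarrow> trig_poly e B2 x = 0) \<and>
           (\<Sum>k\<in>B2. (norm (e k))\<^sup>2) \<le> 1 / real ((N + 1) ^ CARD('n))"
proof -
  define M where "M = 2 * N + 1"
  have fin: "finite B" "finite B2" unfolding B_def B2_def by (auto intro: finite_Pi_vec)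
  have card: "card B = (N + 1) ^ CARD('n)" unfolding B_def by (simp add: card_Pi_vec nat_add_distrib)
  obtain x0 where x0: "x0 \<in> grid M" and "0 < norm (trig_poly c B x0)"
    and max: "\<forall>x\<in>grid M. norm (trig_poly c B x) \<le> norm (trig_poly c B x0)"
    using exists_grid_peak[OF fin(1) _ _ assms(3), of "int N" M] by (auto simp: B_def M_def)
  define A where "A = norm (trig_poly c B x0)"
  have "A > 0" using \<open>0 < norm (trig_poly c B x0)\<close> by (simp add: A_def)
  define d where "d j = peak_kernel B x0 j / A" for j
  define e where "e k = (\<Sum>l\<in>B. if k - l \<in> B then c l * d (k - l) else 0)" for k
  have prod: "trig_poly e B2 x = trig_poly c B x * trig_poly d B x" for x
    unfolding e_def using fin
    by (rule trig_poly_mult) (auto simp: B_def B2_def dest: add_mem_Pi_vec_atLeastAtMost)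
  have "B \<noteq> {}" using assms(3) by blast
  then have "trig_poly d B x0 = 1 / A"
    using trig_poly_peak_kernel_at[OF fin(1)] by (simp add: trig_poly_def d_def sum_divide_distrib[symmetric])
  have "real M ^ CARD('n) * (\<Sum>k\<in>B2. (norm (e k))\<^sup>2)
      = (\<Sum>x\<in>(grid M :: (real ^ 'n) set). (norm (trig_poly c B x))\<^sup>2 * (norm (trig_poly d B x))\<^sup>2)"
    using grid_parseval[OF fin(2), of "2 * int N" M e]
    by (simp add: B2_def M_def prod norm_mult power_mult_distrib flip: B2_def)
  also have "\<dots> \<le> (\<Sum>x\<in>(grid M :: (real ^ 'n) set). A\<^sup>2 * (norm (trig_poly d B x))\<^sup>2)"
    using max by (intro sum_mono mult_right_mono power_mono) (auto simp: A_def)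
  also have "\<dots> = A\<^sup>2 * (real M ^ CARD('n) * (\<Sum>j\<in>B. (norm (d j))\<^sup>2))"
    using grid_parseval[OF fin(1), of "int N" M d] by (simp add: B_def M_def flip: B_def sum_distrib_left)
  also have "(\<Sum>j\<in>B. (norm (d j))\<^sup>2) = 1 / (real (card B) * A\<^sup>2)"
    using sum_norm_peak_kernel[of B x0] \<open>A > 0\<close>
    by (simp add: d_def norm_divide power_divide sum_divide_distrib[symmetric])
  finally have "real M ^ CARD('n) * (\<Sum>k\<in>B2. (norm (e k))\<^sup>2) \<le> real M ^ CARD('n) * (1 / real (card B))"
    using \<open>A > 0\<close> by (simp add: field_simps)
  then have "(\<Sum>k\<in>B2. (norm (e k))\<^sup>2) \<le> 1 / real (card B)"
    by (rule mult_left_le_imp_le) (simp add: M_def)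
  moreover have "norm (trig_poly e B2 x0) = 1"
    using \<open>trig_poly d B x0 = 1 / A\<close> \<open>A > 0\<close> by (simp add: prod norm_mult norm_divide A_def)
  ultimately show ?thesis
    using x0 card by (intro exI[of _ e] exI[of _ x0]) (simp add: prod M_def)
qed

lemma exists_localized_vanishing_trig_poly:
  fixes \<xi> :: "(real ^ 'n::finite) list" and N :: nat
  assumes "length \<xi> < (N + 1) ^ CARD('n)"
  defines "B2 \<equiv> Pi_vec {0..2 * int N} :: (int ^ 'n) set"
  shows "\<exists>e x0. x0 \<in> grid (2 * N + 1) \<and> norm (trig_poly e B2 x0) = 1 \<and>
           (\<forall>y\<in>set \<xi>. trig_poly e B2 y = 0) \<and>
           (\<Sum>k\<in>B2. (norm (e k))\<^sup>2) \<le> 1 / real ((N + 1) ^ CARD('n))"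
proof -
  define B :: "(int ^ 'n) set" where "B = Pi_vec {0..int N}"
  have "finite B" "card B = (N + 1) ^ CARD('n)"
    by (simp_all add: B_def finite_Pi_vec card_Pi_vec nat_add_distrib)
  then obtain c where "\<exists>k\<in>B. c k \<noteq> 0" and "\<forall>y\<in>set \<xi>. trig_poly c B y = 0"
    using exists_nonzero_annihilator[of B "map (\<lambda>y k. trig k y) \<xi>"] assms(1)
    by (auto simp: trig_poly_def)
  then show ?thesis
    using exists_localized_trig_poly[where c = c and N = N] unfolding B_def B2_def by blast
qed

lemma norm_coeffs_le_of_sum_squares_le:
  fixes e :: "int ^ 'n::finite \<Rightarrow> complex" and N :: nat
  assumes "1 \<le> N" "0 < \<beta>" "\<beta> \<le> 2"
    and "(\<Sum>k\<in>Pi_vec {0..2 * int N}. (norm (e k))\<^sup>2) \<le> 1 / real ((N + 1) ^ CARD('n))"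
  shows "(\<Sum>k\<in>Pi_vec {0..2 * int N}. norm (e k) powr \<beta>) powr (1 / \<beta>)
       \<le> 3 powr (real CARD('n) * (1 / \<beta> - 1 / 2)) * real N powr (real CARD('n) / \<beta> - real CARD('n))"
proof -
  define d where "d = real CARD('n)"
  define \<gamma> where "\<gamma> = 1 / \<beta> - 1 / 2"
  have "\<gamma> \<ge> 0" using assms(2,3) by (simp add: \<gamma>_def field_simps)
  have N: "real N > 0" using assms(1) by simp
  let ?B2 = "Pi_vec {0..2 * int N} :: (int ^ 'n) set"
  have "real (card ?B2) = real (2 * N + 1) ^ CARD('n)"
    by (simp add: card_Pi_vec nat_add_distrib nat_mult_distrib)
  also have "\<dots> \<le> (3 * real N) ^ CARD('n)"
    using assms(1) by (intro power_mono) auto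
  finally have "real (card ?B2) powr \<gamma> \<le> ((3 * real N) ^ CARD('n)) powr \<gamma>"
    using \<open>\<gamma> \<ge> 0\<close> by (intro powr_mono2) auto
  also have "\<dots> = (3 * real N) powr (d * \<gamma>)"
    using N by (subst powr_realpow[symmetric]) (auto simp: d_def powr_powr)
  finally have card_bound: "real (card ?B2) powr \<gamma> \<le> (3 * real N) powr (d * \<gamma>)" .
  have sqrt_bound: "sqrt (\<Sum>k\<in>?B2. (norm (e k))\<^sup>2) \<le> real N powr (- d / 2)"
  proof -
    have "real N ^ CARD('n) \<le> real ((N + 1) ^ CARD('n))" by (simp add: power_mono)
    then have "1 / real ((N + 1) ^ CARD('n)) \<le> real N powr (- d)"
      using N by (simp add: d_def powr_minus powr_realpow divide_simps)
    then have "sqrt (\<Sum>k\<in>?B2. (norm (e k))\<^sup>2) \<le> sqrt (real N powr (- d))"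
      using assms(4) by (intro real_sqrt_le_mono) linarith
    then show ?thesis using N by (simp add: powr_half_sqrt_powr[symmetric])
  qed
  have "(\<Sum>k\<in>?B2. norm (e k) powr \<beta>) powr (1 / \<beta>)
      \<le> real (card ?B2) powr \<gamma> * sqrt (\<Sum>k\<in>?B2. (norm (e k))\<^sup>2)"
    using powr_sum_powr_le_card_powr_sqrt[of ?B2 \<beta> "\<lambda>k. norm (e k)"] assms(2,3)
    by (simp add: \<gamma>_def finite_Pi_vec)
  also have "\<dots> \<le> (3 * real N) powr (d * \<gamma>) * real N powr (- d / 2)"
    using card_bound sqrt_bound by (intro mult_mono) (auto intro: sum_nonneg)
  also have "\<dots> = 3 powr (d * \<gamma>) * real N powr (d / \<beta> - d)"
  proof -
    have "d * \<gamma> + - d / 2 = d / \<beta> - d"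
      unfolding \<gamma>_def by (simp add: right_diff_distrib)
    then have "real N powr (d * \<gamma>) * real N powr (- d / 2) = real N powr (d / \<beta> - d)"
      by (simp only: powr_add[symmetric])
    moreover have "(3 * real N) powr (d * \<gamma>) = 3 powr (d * \<gamma>) * real N powr (d * \<gamma>)"
      using N by (simp add: powr_mult)
    ultimately show ?thesis by (simp add: mult.assoc)
  qed
  finally show ?thesis by (simp add: d_def \<gamma>_def)
qed

lemma sum_norm_le_of_sum_squares_le:
  fixes e :: "int ^ 'n::finite \<Rightarrow> complex" and N :: nat
  assumes "1 \<le> N" "(\<Sum>k\<in>Pi_vec {0..2 * int N}. (norm (e k))\<^sup>2) \<le> 1 / real ((N + 1) ^ CARD('n))"
  shows "(\<Sum>k\<in>Pi_vec {0..2 * int N}. norm (e k)) \<le> 2 ^ CARD('n)"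
proof -
  have "(\<Sum>k\<in>Pi_vec {0..2 * int N}. norm (e k)) \<le> 3 powr (real CARD('n) / 2)"
    using norm_coeffs_le_of_sum_squares_le[where \<beta> = 1, OF assms(1) _ _ assms(2)] assms(1) by simp
  also have "\<dots> \<le> 4 powr (real CARD('n) / 2)"
    by (intro powr_mono2) auto
  also have "\<dots> = (2 powr 2) powr (real CARD('n) / 2)"
    by simp
  also have "\<dots> = 2 ^ CARD('n)"
    by (simp add: powr_powr powr_realpow)
  finally show ?thesis .
qed

text \<open>The side of the cube on which the Lipschitz estimate loses at most half of the peak value.\<close>

definition bump_width :: "nat \<Rightarrow> nat \<Rightarrow> real" where
  "bump_width d N = 1 / (2 ^ (d + 2) * real d * real N)"

text \<open>Half the scaling factor under which the localized polynomial stays in the class.\<close>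

definition bump_height :: "nat \<Rightarrow> real \<Rightarrow> real \<Rightarrow> nat \<Rightarrow> real" where
  "bump_height d \<beta> r N = 8 powr (- r) * 3 powr (- real d * (1 / \<beta> - 1 / 2)) / 2 * real N powr (real d - real d / \<beta> - r)"

lemma bump_coeffs_norm_le:
  fixes e :: "int ^ 'n::finite \<Rightarrow> complex" and N :: nat and r :: real
  assumes "1 \<le> N" "0 < \<beta>" "\<beta> \<le> 2"
    and "(\<Sum>k\<in>Pi_vec {0..2 * int N}. (norm (e k))\<^sup>2) \<le> 1 / real ((N + 1) ^ CARD('n))"
  defines "\<kappa> \<equiv> 2 * bump_height CARD('n) \<beta> r N"
  shows "(\<Sum>k\<in>Pi_vec {0..2 * int N}. norm (\<kappa> * e k) powr \<beta>) powr (1 / \<beta>) \<le> (8 * real N) powr (- r)"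
proof -
  define d where "d = real CARD('n)"
  let ?B2 = "Pi_vec {0..2 * int N} :: (int ^ 'n) set"
  have "\<kappa> > 0" "real N > 0" using assms(1) by (simp_all add: \<kappa>_def bump_height_def)
  have "(\<Sum>k\<in>?B2. norm (\<kappa> * e k) powr \<beta>) powr (1 / \<beta>) = \<kappa> * (\<Sum>k\<in>?B2. norm (e k) powr \<beta>) powr (1 / \<beta>)"
    using \<open>\<kappa> > 0\<close> assms(2)
    by (simp add: norm_mult powr_mult sum_distrib_left[symmetric] powr_powr sum_nonneg)
  also have "\<dots> \<le> \<kappa> * (3 powr (d * (1 / \<beta> - 1 / 2)) * real N powr (d / \<beta> - d))"
    using norm_coeffs_le_of_sum_squares_le[OF assms(1-4)] \<open>\<kappa> > 0\<close> by (simp add: d_def)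
  also have "\<dots> = 8 powr (- r) * (3 powr (- d * (1 / \<beta> - 1 / 2)) * 3 powr (d * (1 / \<beta> - 1 / 2)))
                    * (real N powr (d - d / \<beta> - r) * real N powr (d / \<beta> - d))"
    by (simp add: \<kappa>_def bump_height_def d_def mult_ac)
  also have "\<dots> = 8 powr (- r) * real N powr (- r)"
    by (simp flip: powr_add)
  finally show ?thesis using \<open>real N > 0\<close> by (simp add: powr_mult)
qed

lemma scaled_trig_poly_in_A_class:
  fixes e :: "int ^ 'n::finite \<Rightarrow> complex" and N :: nat and s :: complex
  assumes "1 \<le> N" "0 < \<beta>" "\<beta> \<le> 1" "0 < r" "norm s = 1"
    and "(\<Sum>k\<in>Pi_vec {0..2 * int N}. (norm (e k))\<^sup>2) \<le> 1 / real ((N + 1) ^ CARD('n))"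
  shows "trig_poly (\<lambda>k. s * (2 * bump_height CARD('n) \<beta> r N * e k)) (Pi_vec {0..2 * int N}) \<in> A_class r \<beta>"
proof (rule trig_poly_in_A_class)
  show "supnorm_int k \<le> int (2 * N)" if "k \<in> Pi_vec {0..2 * int N}" for k :: "int ^ 'n"
    using that unfolding supnorm_int_def by (subst Max_le_iff) (auto simp: Pi_vec_def)
  show "(\<Sum>k\<in>Pi_vec {0..2 * int N}. norm (s * (2 * bump_height CARD('n) \<beta> r N * e k)) powr \<beta>) powr (1 / \<beta>)
      \<le> (4 * real (2 * N)) powr (- r)"
    using bump_coeffs_norm_le[OF assms(1,2) _ assms(6), of r] assms(3,5)
    by (simp add: norm_mult mult.assoc)
qed (use assms in \<open>auto simp: finite_Pi_vec\<close>)

lemma bump_width_less_grid_step: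
  assumes "1 \<le> d" "1 \<le> N"
  shows "bump_width d N < 2 * pi / real (2 * N + 1)"
proof -
  have "(2::real) ^ 1 * 1 \<le> 2 ^ d * real d"
    using assms(1) by (intro mult_mono power_increasing) auto
  then have "bump_width d N \<le> 1 / (8 * real N)"
    using assms(2) unfolding bump_width_def by (intro divide_left_mono) (auto simp: power_add mult.commute)
  also have "\<dots> < 2 * pi / real (2 * N + 1)"
  proof -
    have "real (2 * N + 1) \<le> 3 * (16 * real N)" using assms(2) by simp
    also have "\<dots> < pi * (16 * real N)"
      using pi_gt3 assms(2) by (intro mult_strict_right_mono) auto
    finally show ?thesis using assms(2) by (simp add: field_simps)
  qed
  finally show ?thesis .
qed

lemma norm_trig_poly_ge_on_cube:
  fixes a :: "int ^ 'n::finite \<Rightarrow> complex" and N :: nat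
  assumes "1 \<le> N" "\<And>k i. k \<in> S \<Longrightarrow> \<bar>k $ i\<bar> \<le> 2 * int N"
    and "(\<Sum>k\<in>S. norm (a k)) \<le> 2 ^ CARD('n) * norm (trig_poly a S x0)"
    and "x \<in> cbox x0 (\<chi> i. x0 $ i + bump_width CARD('n) N)"
  shows "norm (trig_poly a S x0) / 2 \<le> norm (trig_poly a S x)"
proof -
  define d where "d = CARD('n)"
  have "\<bar>x $ i - x0 $ i\<bar> \<le> bump_width d N" for i
    using assms(4) by (auto simp: mem_box_cart d_def dest: spec[of _ i])
  then have "norm (trig_poly a S x - trig_poly a S x0) \<le> real d * (2 * real N) * bump_width d N * (\<Sum>k\<in>S. norm (a k))"
    using norm_trig_poly_diff_le[of S "2 * int N" x x0 "bump_width d N" a] assms(2) by (simp add: d_def)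
  also have "\<dots> \<le> real d * (2 * real N) * bump_width d N * (2 ^ d * norm (trig_poly a S x0))"
    using assms(3) by (intro mult_left_mono) (auto simp: d_def bump_width_def)
  also have "\<dots> = norm (trig_poly a S x0) / 2"
    using assms(1) by (simp add: d_def bump_width_def power_add field_simps)
  finally show ?thesis
    using norm_triangle_ineq2[of "trig_poly a S x0" "trig_poly a S x"] by (simp add: norm_minus_commute)
qed

lemma emeasure_lborel_cube:
  fixes x0 :: "real ^ 'n::finite"
  assumes "0 \<le> \<delta>"
  shows "emeasure lborel (cbox x0 (\<chi> i. x0 $ i + \<delta>)) = ennreal (\<delta> ^ CARD('n))"
proof -
  have "x0 \<in> cbox x0 (\<chi> i. x0 $ i + \<delta>)" using assms by (simp add: mem_box_cart)
  then have "cbox x0 (\<chi> i. x0 $ i + \<delta>) \<noteq> {}" by auto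
  then have "measure lborel (cbox x0 (\<chi> i. x0 $ i + \<delta>)) = \<delta> ^ CARD('n)"
    by (simp add: content_cbox_cart)
  moreover have "emeasure lborel (cbox x0 (\<chi> i. x0 $ i + \<delta>)) = ennreal (measure lborel (cbox x0 (\<chi> i. x0 $ i + \<delta>)))"
    using emeasure_lborel_cbox_finite[of x0 "\<chi> i. x0 $ i + \<delta>"] by (intro emeasure_eq_ennreal_measure) auto
  ultimately show ?thesis by simp
qed

lemma exists_fooling_function:
  fixes \<xi> :: "(real ^ 'n::finite) list" and N :: nat
  assumes "1 \<le> N" "length \<xi> < (N + 1) ^ CARD('n)" "0 < \<beta>" "\<beta> \<le> 1" "0 < r"
  shows "\<exists>F Q. F \<in> A_class r \<beta> \<and> (\<lambda>x. - F x) \<in> A_class r \<beta> \<and> (\<forall>y\<in>set \<xi>. F y = 0) \<and>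
           F \<in> borel_measurable lborel \<and> Q \<in> sets lborel \<and> Q \<subseteq> torus \<and>
           emeasure lborel Q = ennreal (bump_width CARD('n) N ^ CARD('n)) \<and>
           (\<forall>x\<in>Q. bump_height CARD('n) \<beta> r N \<le> norm (F x))"
proof -
  define B2 :: "(int ^ 'n) set" where "B2 = Pi_vec {0..2 * int N}"
  obtain e x0 where x0: "x0 \<in> grid (2 * N + 1)" and peak: "norm (trig_poly e B2 x0) = 1"
    and vanish: "\<forall>y\<in>set \<xi>. trig_poly e B2 y = 0"
    and l2: "(\<Sum>k\<in>B2. (norm (e k))\<^sup>2) \<le> 1 / real ((N + 1) ^ CARD('n))"
    using exists_localized_vanishing_trig_poly[OF assms(2)] unfolding B2_def by blast
  define \<kappa> where "\<kappa> = 2 * bump_height CARD('n) \<beta> r N"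
  have "\<kappa> > 0" using assms(1) by (simp add: \<kappa>_def bump_height_def)
  define F where "F = trig_poly (\<lambda>k. \<kappa> * e k) B2"
  have "(\<lambda>x. - F x) = trig_poly (\<lambda>k. - 1 * (\<kappa> * e k)) B2"
    by (simp add: F_def trig_poly_def fun_eq_iff sum_negf[symmetric])
  then have "F \<in> A_class r \<beta>" "(\<lambda>x. - F x) \<in> A_class r \<beta>"
    using scaled_trig_poly_in_A_class[where s = 1, OF assms(1,3-5) _ l2[unfolded B2_def]]
      scaled_trig_poly_in_A_class[where s = "- 1", OF assms(1,3-5) _ l2[unfolded B2_def]]
    by (simp_all add: F_def \<kappa>_def B2_def)
  moreover have "\<forall>y\<in>set \<xi>. F y = 0"
    using vanish by (simp add: F_def trig_poly_def mult.assoc flip: sum_distrib_left)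
  moreover have "F \<in> borel_measurable lborel"
    unfolding F_def by (rule borel_measurable_trig_poly)
  moreover have "\<forall>x\<in>cbox x0 (\<chi> i. x0 $ i + bump_width CARD('n) N). bump_height CARD('n) \<beta> r N \<le> norm (F x)"
  proof
    fix x assume "x \<in> cbox x0 (\<chi> i. x0 $ i + bump_width CARD('n) N)"
    moreover have "norm (F x0) = \<kappa>"
      using peak \<open>\<kappa> > 0\<close> by (simp add: F_def trig_poly_def mult.assoc norm_mult flip: sum_distrib_left)
    moreover have "(\<Sum>k\<in>B2. norm (\<kappa> * e k)) \<le> 2 ^ CARD('n) * \<kappa>"
      using sum_norm_le_of_sum_squares_le[OF assms(1) l2[unfolded B2_def]] \<open>\<kappa> > 0\<close>
      by (simp add: B2_def norm_mult sum_distrib_left[symmetric] mult.commute)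
    ultimately show "bump_height CARD('n) \<beta> r N \<le> norm (F x)"
      using norm_trig_poly_ge_on_cube[OF assms(1), of B2 "\<lambda>k. \<kappa> * e k" x0 x]
      by (auto simp: F_def \<kappa>_def B2_def Pi_vec_def)
  qed
  moreover have "cbox x0 (\<chi> i. x0 $ i + bump_width CARD('n) N) \<subseteq> torus"
    using assms(1) bump_width_less_grid_step[OF _ assms(1), of "CARD('n)"]
    by (intro cbox_at_grid_point_subset_torus[OF x0]) (auto simp: bump_width_def Suc_le_eq)
  ultimately show ?thesis
    by (intro exI[of _ F] exI[of _ "cbox x0 (\<chi> i. x0 $ i + bump_width CARD('n) N)"])
       (simp add: emeasure_lborel_cube bump_width_def)
qed

section \<open>The rate\<close>

lemma rho_o_A_class_ge_bump:
  fixes p :: ennreal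
  assumes "1 \<le> N" "m < (N + 1) ^ CARD('n::finite)" "0 < \<beta>" "\<beta> \<le> 1" "0 < r" "0 < p"
  shows "ennreal (bump_height CARD('n) \<beta> r N * (bump_width CARD('n) N ^ CARD('n) / (2 * (2 * pi) ^ CARD('n))) powr inv_exp p)
       \<le> rho_o m (A_class r \<beta> :: (real ^ 'n \<Rightarrow> complex) set) p"
  using assms
  by (intro rho_o_ge_of_fooling_pairs exists_fooling_function) (simp_all add: bump_width_def bump_height_def)

lemma exists_bump_size:
  fixes m d :: nat
  assumes "1 \<le> m" "1 \<le> d"
  obtains N :: nat where "1 \<le> N" "m < (N + 1) ^ d" "real N \<le> 2 * real m powr (1 / real d)"
proof
  define x where "x = real m powr (1 / real d)"
  have "x \<ge> 1" unfolding x_def using assms by (intro ge_one_powr_ge_zero) auto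
  then have N: "x \<le> real (nat \<lceil>x\<rceil>)" "real (nat \<lceil>x\<rceil>) < x + 1" by linarith+
  then have "1 \<le> real (nat \<lceil>x\<rceil>)" using \<open>x \<ge> 1\<close> by linarith
  then show "1 \<le> nat \<lceil>x\<rceil>" by simp
  show "real (nat \<lceil>x\<rceil>) \<le> 2 * real m powr (1 / real d)"
    using N \<open>x \<ge> 1\<close> by (simp add: x_def)
  have "real m = x ^ d"
    using assms by (simp add: x_def powr_powr flip: powr_realpow)
  also have "\<dots> < (real (nat \<lceil>x\<rceil>) + 1) ^ d"
  proof (rule power_strict_mono)
    show "x < real (nat \<lceil>x\<rceil>) + 1" using N(1) by linarith
  qed (use \<open>x \<ge> 1\<close> assms(2) in auto)
  also have "\<dots> = real ((nat \<lceil>x\<rceil> + 1) ^ d)"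
    by (simp add: add.commute)
  finally show "m < (nat \<lceil>x\<rceil> + 1) ^ d"
    by (simp only: of_nat_less_iff)
qed

lemma bump_bound_ge_powr:
  fixes d :: nat and \<beta> r \<iota> :: real
  assumes "1 \<le> d" "0 \<le> \<iota>" "0 < \<beta>" "\<beta> \<le> 1" "0 < r"
  shows "\<exists>C>0. \<forall>m N. 1 \<le> m \<longrightarrow> 1 \<le> N \<longrightarrow> real N \<le> 2 * real m powr (1 / real d) \<longrightarrow>
           C * real m powr (1 - \<iota> - 1 / \<beta> - r / real d)
             \<le> bump_height d \<beta> r N * (bump_width d N ^ d / (2 * (2 * pi) ^ d)) powr \<iota>"
proof -
  define e where "e = 1 - \<iota> - 1 / \<beta> - r / real d"
  define K1 where "K1 = 8 powr (- r) * 3 powr (- real d * (1 / \<beta> - 1 / 2)) / 2"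
  define K2 where "K2 = (1 / (2 ^ (d + 2) * real d)) ^ d / (2 * (2 * pi) ^ d)"
  have "K1 > 0" "K2 > 0" using assms(1) by (simp_all add: K1_def K2_def)
  have "1 \<le> 1 / \<beta>" "0 < r / real d" using assms by simp_all
  then have "e \<le> 0" using assms(2) by (simp add: e_def)
  have "K1 * K2 powr \<iota> * 2 powr (real d * e) * real m powr e
          \<le> bump_height d \<beta> r N * (bump_width d N ^ d / (2 * (2 * pi) ^ d)) powr \<iota>"
    if "1 \<le> m" "1 \<le> N" "real N \<le> 2 * real m powr (1 / real d)" for m N :: nat
  proof -
    have "2 powr (real d * e) * real m powr e = (2 * real m powr (1 / real d)) powr (real d * e)"
      using that(1) assms(1) by (simp add: powr_mult powr_powr)
    also have "\<dots> \<le> real N powr (real d * e)"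
      using that \<open>e \<le> 0\<close> by (intro powr_mono2') (auto simp: mult_nonneg_nonpos)
    also have "\<dots> = real N powr (real d - real d / \<beta> - r) * (real N powr (- real d)) powr \<iota>"
    proof -
      have "real d * e = (real d - real d / \<beta> - r) + - real d * \<iota>"
        using assms(1) by (simp add: e_def field_simps)
      then show ?thesis by (simp only: powr_add powr_powr)
    qed
    finally have "K1 * K2 powr \<iota> * (2 powr (real d * e) * real m powr e)
        \<le> K1 * real N powr (real d - real d / \<beta> - r) * (K2 * real N powr (- real d)) powr \<iota>"
      using \<open>K1 > 0\<close> \<open>K2 > 0\<close> that(2) by (simp add: powr_mult mult_left_mono mult_ac)
    also have "K2 * real N powr (- real d) = bump_width d N ^ d / (2 * (2 * pi) ^ d)"
      using that(2) by (simp add: K2_def bump_width_def powr_minus powr_realpow power_divide field_simps)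
    finally show ?thesis by (simp add: bump_height_def K1_def mult_ac)
  qed
  moreover have "K1 * K2 powr \<iota> * 2 powr (real d * e) > 0"
    using \<open>K1 > 0\<close> \<open>K2 > 0\<close> by simp
  ultimately show ?thesis unfolding e_def by blast
qed

theorem proposition5p6:
  fixes \<beta> r :: real and p :: ennreal
  assumes "0 < \<beta>" and "\<beta> \<le> 1" and "0 < r" and "2 \<le> p"
  shows "\<exists>c>0. \<forall>m::nat.
     ennreal (c * real m powr (1 - inv_exp p - 1 / \<beta> - r / real CARD('n::finite)))
       \<le> rho_o m (A_class r \<beta> :: (real ^ 'n \<Rightarrow> complex) set) p"
proof -
  let ?d = "CARD('n)"
  have "1 \<le> ?d" by (simp add: Suc_le_eq)
  have "0 < p" by (rule less_le_trans[OF _ assms(4)]) simp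
  have "0 \<le> inv_exp p" by (simp add: inv_exp_def enn2real_nonneg)
  obtain C where "C > 0" and C: "\<And>m N. 1 \<le> m \<Longrightarrow> 1 \<le> N \<Longrightarrow> real N \<le> 2 * real m powr (1 / real ?d) \<Longrightarrow>
      C * real m powr (1 - inv_exp p - 1 / \<beta> - r / real ?d)
        \<le> bump_height ?d \<beta> r N * (bump_width ?d N ^ ?d / (2 * (2 * pi) ^ ?d)) powr inv_exp p"
    using bump_bound_ge_powr[OF \<open>1 \<le> ?d\<close> \<open>0 \<le> inv_exp p\<close> assms(1-3)] by blast
  have "ennreal (C * real m powr (1 - inv_exp p - 1 / \<beta> - r / real ?d)) \<le> rho_o m (A_class r \<beta> :: (real ^ 'n \<Rightarrow> complex) set) p" for m
  proof (cases "m = 0")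
    case False
    then obtain N where N: "1 \<le> N" "m < (N + 1) ^ ?d" "real N \<le> 2 * real m powr (1 / real ?d)"
      using exists_bump_size[of m ?d] \<open>1 \<le> ?d\<close> by auto
    have "ennreal (C * real m powr (1 - inv_exp p - 1 / \<beta> - r / real ?d))
        \<le> ennreal (bump_height ?d \<beta> r N * (bump_width ?d N ^ ?d / (2 * (2 * pi) ^ ?d)) powr inv_exp p)"
      using C[OF _ N(1,3)] False by (intro ennreal_leI) simp
    also have "\<dots> \<le> rho_o m (A_class r \<beta> :: (real ^ 'n \<Rightarrow> complex) set) p"
      by (rule rho_o_A_class_ge_bump[OF N(1,2) assms(1-3) \<open>0 < p\<close>])
    finally show ?thesis .
  qed simp
  with \<open>C > 0\<close> show ?thesis by blast
qed

end
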